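(* Let $w$ be an infinite word, and let $n'<n''$ be two consecutive lengths of palindromic prefixes of $w$ (i.e. no palindromic prefix of $w$ has length strictly between them), with corresponding prefixes $\pi'$ and $\pi''$, and write $\pi''=\pi'\omega$. Then every palindromic prefix $\pi$ of $w$ with $n'\le|\pi|\le n'+n''$ can be written $\pi=\pi'\omega^t$ for some integer $t\ge0$.
   Context: Infinite words are right-infinite; a finite word is a palindrome if it equals its reversal, the empty word being a palindrome; $|u|$ is the length of $u$. *)

theory Defs
  imports Main
begin

definition pref :: "(nat \<Rightarrow> 'a) \<Rightarrow> nat \<Rightarrow> 'a list" where
  "pref w n = map w [0..<n]"

definition palindrome :: "'a list \<Rightarrow> bool" where
  "palindrome u \<longleftrightarrow> rev u = u"

definition wpow :: "'a list \<Rightarrow> nat \<Rightarrow> 'a list" where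
  "wpow u t = concat (replicate t u)"

end

theory Submission
  imports Defs
begin

(* Let d = n'' - n'. Two palindromic prefixes of lengths K < L make L - K a period of the longer
   one; conversely, a palindromic prefix of length L with period q has a palindromic prefix of
   length L - q. Hence d is the least period of the prefix of length n'': a smaller period would
   give a palindromic prefix strictly between n' and n''. If n'' < |pi| <= n' + n'', then
   p = |pi| - n'' is a period of pi with p + d <= n'', and subtracting periods as in Euclid's
   algorithm (Fine and Wilf) shows that d divides p and is a period of all of pi, so that
   pi = pi' omega^(1 + p/d). *)

definition prefix_period :: "(nat \<Rightarrow> 'a) \<Rightarrow> nat \<Rightarrow> nat \<Rightarrow> bool" where
  "prefix_period w L q \<longleftrightarrow> (\<forall>i. i + q < L \<longrightarrow> w i = w (i + q))"

lemma prefix_periodD: "prefix_period w L q \<Longrightarrow> i + q < L \<Longrightarrow> w i = w (i + q)"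
  unfolding prefix_period_def by blast

lemma prefix_period_mono: "prefix_period w L q \<Longrightarrow> K \<le> L \<Longrightarrow> prefix_period w K q"
  unfolding prefix_period_def by auto

lemma prefix_period_mult:
  assumes "prefix_period w L d" and "a + c * d < L"
  shows "w a = w (a + c * d)"
  using assms(2)
proof (induction c)
  case (Suc c)
  then have "w a = w (a + c * d)" by simp
  also have "\<dots> = w (a + c * d + d)"
    using Suc.prems by (intro prefix_periodD[OF assms(1)]) simp
  finally show ?case by (simp add: algebra_simps)
qed simp

lemma prefix_period_diff:
  assumes p: "prefix_period w L p" and q: "prefix_period w L q"
    and "p < q" and "p + q \<le> L"
  shows "prefix_period w L (q - p)"
  unfolding prefix_period_def
proof (intro allI impI)
  fix i assume i: "i + (q - p) < L"
  show "w i = w (i + (q - p))"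
  proof (cases "i + q < L")
    case True
    then have "w i = w (i + q)" by (rule prefix_periodD[OF q])
    also have "\<dots> = w (i + (q - p) + p)" using \<open>p < q\<close> by simp
    also have "\<dots> = w (i + (q - p))"
      using True \<open>p < q\<close> by (intro prefix_periodD[OF p, symmetric]) simp
    finally show ?thesis .
  next
    case False
    then have "p \<le> i" using \<open>p + q \<le> L\<close> by simp
    then have "w i = w (i - p + p)" by simp
    also have "\<dots> = w (i - p)"
      using i \<open>p \<le> i\<close> \<open>p < q\<close> by (intro prefix_periodD[OF p, symmetric]) simp
    also have "\<dots> = w (i - p + q)"
      using i \<open>p \<le> i\<close> \<open>p < q\<close> by (intro prefix_periodD[OF q]) simp
    also have "\<dots> = w (i + (q - p))" using \<open>p \<le> i\<close> \<open>p < q\<close> by simp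
    finally show ?thesis .
  qed
qed

lemma least_prefix_period_dvd:
  assumes d: "prefix_period w L d" and "0 < d"
    and least: "\<And>q. 0 < q \<Longrightarrow> q < d \<Longrightarrow> \<not> prefix_period w L q"
    and "prefix_period w L p" and "0 < p" and "p + d \<le> L"
  shows "d dvd p"
  using assms(4-6)
proof (induction p rule: less_induct)
  case (less p)
  consider "p < d" | "p = d" | "d < p" by linarith
  then show ?case
  proof cases
    case 1
    have "prefix_period w L (d - p)"
      by (rule prefix_period_diff[OF less.prems(1) d 1]) (use less.prems in simp)
    with 1 less.prems(2) least[of "d - p"] show ?thesis by simp
  next
    case 3
    have "prefix_period w L (p - d)"
      by (rule prefix_period_diff[OF d less.prems(1) 3]) (use less.prems in simp)
    then have "d dvd p - d"
      by (rule less.IH[rotated]) (use 3 \<open>0 < d\<close> less.prems in simp_all)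
    with 3 show ?thesis by (simp add: dvd_minus_self)
  qed simp
qed

lemma prefix_period_extend:
  assumes p: "prefix_period w L p" and "0 < p" and q: "prefix_period w K q"
    and "K \<le> L" and "p + q \<le> K"
  shows "prefix_period w L q"
  unfolding prefix_period_def
proof (intro allI impI)
  fix j assume "j + q < L"
  then show "w j = w (j + q)"
  proof (induction j rule: less_induct)
    case (less j)
    show ?case
    proof (cases "j + q < K")
      case True
      then show ?thesis by (rule prefix_periodD[OF q])
    next
      case False
      then have "p \<le> j" using \<open>p + q \<le> K\<close> by simp
      have "w j = w (j - p)"
        using \<open>p \<le> j\<close> less.prems prefix_periodD[OF p, of "j - p"] by simp
      also have "\<dots> = w (j - p + q)"
        using less.IH[of "j - p"] less.prems \<open>0 < p\<close> \<open>p \<le> j\<close> \<open>p + q \<le> K\<close> False by simp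
      also have "\<dots> = w (j + q)"
        using \<open>p \<le> j\<close> less.prems prefix_periodD[OF p, of "j - p + q"] by simp
      finally show ?thesis .
    qed
  qed
qed

lemma pref_add: "pref w (m + n) = pref w m @ map w [m..<m + n]"
  unfolding pref_def upt_add_eq_append[OF le0] by simp

lemma wpow_Suc_right: "wpow u (Suc t) = wpow u t @ u"
  by (induction t) (simp_all add: wpow_def)

lemma pref_eq_append_wpow:
  assumes "prefix_period w L d" and "n + t * d \<le> L"
  shows "pref w (n + t * d) = pref w n @ wpow (map w [n..<n + d]) t"
  using assms(2)
proof (induction t)
  case 0
  then show ?case by (simp add: wpow_def)
next
  case (Suc t)
  have "map w [n + t * d..<n + t * d + d] = map w [n..<n + d]"
  proof (rule nth_equalityI)
    fix i assume "i < length (map w [n + t * d..<n + t * d + d])"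
    then have "i < d" by simp
    have "w (n + i) = w (n + i + t * d)"
      by (rule prefix_period_mult[OF assms(1)]) (use Suc.prems \<open>i < d\<close> in simp)
    then show "map w [n + t * d..<n + t * d + d] ! i = map w [n..<n + d] ! i"
      using \<open>i < d\<close> by (simp add: ac_simps)
  qed simp
  moreover have "pref w (n + Suc t * d) = pref w (n + t * d) @ map w [n + t * d..<n + t * d + d]"
    using pref_add[of w "n + t * d" d] by (simp add: ac_simps)
  ultimately show ?case
    using Suc by (simp add: wpow_Suc_right)
qed

lemma palindrome_pref_iff: "palindrome (pref w L) \<longleftrightarrow> (\<forall>i<L. w i = w (L - 1 - i))"
proof -
  have "rev (pref w L) ! i = w (L - 1 - i)" "pref w L ! i = w i" if "i < L" for i
    using that by (simp_all add: pref_def rev_nth)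
  moreover have "length (rev (pref w L)) = length (pref w L)" "length (pref w L) = L"
    by (simp_all add: pref_def)
  ultimately show ?thesis
    unfolding palindrome_def list_eq_iff_nth_eq by (metis (no_types, lifting))
qed

lemma palindrome_prefD: "palindrome (pref w L) \<Longrightarrow> i < L \<Longrightarrow> w i = w (L - 1 - i)"
  unfolding palindrome_pref_iff by blast

lemma prefix_period_of_palindromes:
  assumes "palindrome (pref w K)" and "palindrome (pref w L)" and "K \<le> L"
  shows "prefix_period w L (L - K)"
  unfolding prefix_period_def
proof (intro allI impI)
  fix i assume i: "i + (L - K) < L"
  have "w (i + (L - K)) = w (L - 1 - (i + (L - K)))"
    by (rule palindrome_prefD[OF assms(2) i])
  also have "L - 1 - (i + (L - K)) = K - 1 - i"
    using i \<open>K \<le> L\<close> by simp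
  also have "w (K - 1 - i) = w i"
    by (rule palindrome_prefD[OF assms(1), symmetric]) (use i \<open>K \<le> L\<close> in simp)
  finally show "w i = w (i + (L - K))" by (rule sym)
qed

lemma palindrome_pref_diff_period:
  assumes "palindrome (pref w L)" and "prefix_period w L q" and "q \<le> L"
  shows "palindrome (pref w (L - q))"
  unfolding palindrome_pref_iff
proof (intro allI impI)
  fix i assume i: "i < L - q"
  have "w i = w (L - 1 - i)"
    using palindrome_prefD[OF assms(1), of i] i by simp
  also have "\<dots> = w (L - q - 1 - i)"
    using i prefix_periodD[OF assms(2), of "L - q - 1 - i"] by (simp add: Suc_diff_Suc)
  finally show "w i = w (L - q - 1 - i)" .
qed

lemma consecutive_palindromic_prefixes_least_period:
  assumes "n' < n''" and "palindrome (pref w n')" and "palindrome (pref w n'')"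
    and "\<And>m. n' < m \<Longrightarrow> m < n'' \<Longrightarrow> \<not> palindrome (pref w m)"
  shows "prefix_period w n'' (n'' - n')"
    and "\<And>q. 0 < q \<Longrightarrow> q < n'' - n' \<Longrightarrow> \<not> prefix_period w n'' q"
proof -
  show "prefix_period w n'' (n'' - n')"
    using assms(1-3) by (simp add: prefix_period_of_palindromes)
  fix q assume "0 < q" "q < n'' - n'"
  then have "n' < n'' - q" "n'' - q < n''" "q \<le> n''" by simp_all
  then show "\<not> prefix_period w n'' q"
    using assms(4)[of "n'' - q"] palindrome_pref_diff_period[OF assms(3), of q] by blast
qed

lemma palindromic_prefix_beyond_least_period:
  assumes "palindrome (pref w L)" and "palindrome (pref w m)" and "L < m"
    and per_d: "prefix_period w L d" and "0 < d"
    and least: "\<And>q. 0 < q \<Longrightarrow> q < d \<Longrightarrow> \<not> prefix_period w L q"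
    and "m + d \<le> 2 * L"
  shows "prefix_period w m d" and "d dvd m - L"
proof -
  have per: "prefix_period w m (m - L)"
    using prefix_period_of_palindromes[OF assms(1,2)] \<open>L < m\<close> by simp
  have pos: "0 < m - L" and bound: "m - L + d \<le> L"
    using \<open>L < m\<close> \<open>m + d \<le> 2 * L\<close> by linarith+
  show "prefix_period w m d"
    using prefix_period_extend[OF per pos per_d] \<open>L < m\<close> bound by simp
  show "d dvd m - L"
    using least_prefix_period_dvd[OF per_d \<open>0 < d\<close> least prefix_period_mono[OF per] pos bound]
      \<open>L < m\<close> by simp
qed

theorem lemma5p4:
  fixes w :: "nat \<Rightarrow> 'a" and n' n'' :: nat and \<omega> \<pi> :: "'a list"
  assumes "n' < n''"
    and "palindrome (pref w n')"
    and "palindrome (pref w n'')"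
    and "\<And>m. n' < m \<Longrightarrow> m < n'' \<Longrightarrow> \<not> palindrome (pref w m)"
    and "pref w n'' = pref w n' @ \<omega>"
    and "\<pi> = pref w (length \<pi>)" and "palindrome \<pi>"
    and "n' \<le> length \<pi>" and "length \<pi> \<le> n' + n''"
  shows "\<exists>t::nat. \<pi> = pref w n' @ wpow \<omega> t"
proof -
  define m d where "m = length \<pi>" and "d = n'' - n'"
  have pal_m: "palindrome (pref w m)" using assms(6,7) m_def by simp
  have "n'' = n' + d" using assms(1) d_def by simp
  then have \<omega>: "\<omega> = map w [n'..<n' + d]"
    using assms(5) pref_add[of w n' d] by simp
  note per_d = consecutive_palindromic_prefixes_least_period[OF assms(1-4), folded d_def]
  show ?thesis
  proof (cases "m \<le> n''")
    case True
    have "\<not> (n' < m \<and> m < n'')" using assms(4) pal_m by blast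
    then have "m = n' \<or> m = n''" using True assms(8) m_def by linarith
    then have "\<pi> = pref w n' @ wpow \<omega> 0 \<or> \<pi> = pref w n' @ wpow \<omega> 1"
      using assms(5,6) m_def by (auto simp: wpow_def)
    then show ?thesis by blast
  next
    case False
    moreover have "0 < d" using assms(1) d_def by simp
    ultimately have "prefix_period w m d" and "d dvd m - n''"
      using palindromic_prefix_beyond_least_period[OF assms(3) pal_m _ per_d(1) _ per_d(2)]
        assms(9) m_def \<open>n'' = n' + d\<close> by simp_all
    from \<open>d dvd m - n''\<close> obtain k where "m - n'' = d * k" by (rule dvdE)
    then have "m = n' + Suc k * d" using False \<open>n'' = n' + d\<close> by (simp add: mult.commute)
    then have "pref w m = pref w n' @ wpow \<omega> (Suc k)"
      using pref_eq_append_wpow[OF \<open>prefix_period w m d\<close>, of n' "Suc k"] \<omega> by simp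
    then show ?thesis using assms(6) m_def by metis
  qed
qed

end
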